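(* Let $D,\ell\in\mathbb{N}$ and $m=\ell D$. Suppose $H,A\subset[0,1)$ are $2^{-m}$-sets such that $H$ is $(D,\ell,R)$-uniform and $A$ is $(D,\ell,R')$-uniform. Then \[ |A+H|\ge2^{-m/D}|H|\prod_{s\in[\ell]:\,R_s=1}R'_s. \]
   Context: A $2^{-m}$-set is a set all of whose elements are integer multiples of $2^{-m}$. $[\ell]=\{0,\dots,\ell-1\}$. $\mathcal{D}_s$ is the family of dyadic intervals $[j2^{-s},(j+1)2^{-s})$, $\mathcal{D}_s(E)$ those meeting $E$, and $\mathcal{N}(E,s)=|\mathcal{D}_s(E)|$. Given a sequence $(R_s)_{s\in[\ell]}$ with values in $[1,2^D]$, a $2^{-m}$-set $A$ is $(D,\ell,R)$-uniform if $\mathcal{N}(A\cap I,(s+1)D)=R_s$ for every $s\in[\ell]$ and every $I\in\mathcal{D}_{sD}(A)$. $A+H=\{a+h:a\in A,h\in H\}$. *)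

theory Defs
  imports Complex_Main
begin

definition dyadic_grid_set :: "nat \<Rightarrow> real set \<Rightarrow> bool" where
  "dyadic_grid_set m E \<longleftrightarrow> (\<forall>x\<in>E. \<exists>k::int. x = of_int k / 2 ^ m)"

definition dyadic_intervals :: "nat \<Rightarrow> real set set" where
  "dyadic_intervals s = {{x. of_int j / 2 ^ s \<le> x \<and> x < (of_int j + 1) / 2 ^ s} | j::int. True}"

definition dyadic_intervals_meeting :: "nat \<Rightarrow> real set \<Rightarrow> real set set" where
  "dyadic_intervals_meeting s E = {I \<in> dyadic_intervals s. I \<inter> E \<noteq> {}}"

definition covering_number :: "real set \<Rightarrow> nat \<Rightarrow> nat" where
  "covering_number E s = card (dyadic_intervals_meeting s E)"

definition uniform_set :: "nat \<Rightarrow> nat \<Rightarrow> (nat \<Rightarrow> nat) \<Rightarrow> real set \<Rightarrow> bool" where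
  "uniform_set D l R A \<longleftrightarrow>
     (\<forall>s<l. \<forall>I\<in>dyadic_intervals_meeting (s * D) A.
        covering_number (A \<inter> I) ((s + 1) * D) = R s)"

definition sumset :: "real set \<Rightarrow> real set \<Rightarrow> real set" where
  "sumset A H = {a + h | a h. a \<in> A \<and> h \<in> H}"

end

theory Submission
  imports Defs
begin

text \<open>
  Prune A to a subset A' that keeps all children of its dyadic intervals at the levels s with
  R s = 1 and a single child at every other level. Then |A'| is at least the product of the
  R' s with R s = 1, and at every level one of A' and H does not branch. For such a pair, a sum
  z = a + h together with the level-s digits of a and h determines their level-(s+1) digits up
  to a carry bit, so z has at most 2^l representations and |A'| |H| <= 2^l |A' + H|.
\<close>

lemma card_eq_sum_card_fibers: "finite X \<Longrightarrow> card X = (\<Sum>y\<in>g ` X. card {x \<in> X. g x = y})"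
  using sum_fun_comp[of X "g ` X" g "\<lambda>_. 1 :: nat"] by simp

lemma card_le_mult_card_image:
  assumes "finite X" "\<And>y. y \<in> g ` X \<Longrightarrow> card {x \<in> X. g x = y} \<le> k"
  shows "card X \<le> k * card (g ` X)"
proof -
  have "card X = (\<Sum>y\<in>g ` X. card {x \<in> X. g x = y})"
    using assms(1) by (rule card_eq_sum_card_fibers)
  also have "\<dots> \<le> (\<Sum>y\<in>g ` X. k)"
    by (rule sum_mono) (rule assms(2))
  finally show ?thesis
    by (simp add: mult.commute)
qed

lemma card_le_2_if_coordinate_fixed:
  fixes U :: "(int \<times> int) set"
  assumes sum_in: "\<And>u. u \<in> U \<Longrightarrow> fst u + snd u \<in> {k - 1, k}"
    and fixed: "(\<forall>u\<in>U. \<forall>v\<in>U. fst u = fst v) \<or> (\<forall>u\<in>U. \<forall>v\<in>U. snd u = snd v)"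
  shows "card U \<le> 2"
proof (cases "U = {}")
  case False
  then obtain u0 where "u0 \<in> U"
    by blast
  have "\<exists>x y. U \<subseteq> {x, y}"
    using fixed
  proof
    assume fst_fixed: "\<forall>u\<in>U. \<forall>v\<in>U. fst u = fst v"
    have "U \<subseteq> {(fst u0, k - 1 - fst u0), (fst u0, k - fst u0)}"
    proof
      fix u assume "u \<in> U"
      then have "fst u = fst u0" "fst u + snd u \<in> {k - 1, k}"
        using fst_fixed sum_in \<open>u0 \<in> U\<close> by blast+
      then show "u \<in> {(fst u0, k - 1 - fst u0), (fst u0, k - fst u0)}"
        by (cases u) auto
    qed
    then show ?thesis
      by blast
  next
    assume snd_fixed: "\<forall>u\<in>U. \<forall>v\<in>U. snd u = snd v"
    have "U \<subseteq> {(k - 1 - snd u0, snd u0), (k - snd u0, snd u0)}"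
    proof
      fix u assume "u \<in> U"
      then have "snd u = snd u0" "fst u + snd u \<in> {k - 1, k}"
        using snd_fixed sum_in \<open>u0 \<in> U\<close> by blast+
      then show "u \<in> {(k - 1 - snd u0, snd u0), (k - snd u0, snd u0)}"
        by (cases u) auto
    qed
    then show ?thesis
      by blast
  qed
  then obtain x y where "U \<subseteq> {x, y}"
    by blast
  then have "card U \<le> card {x, y}"
    by (intro card_mono) auto
  also have "\<dots> \<le> 2"
    by (simp add: card_insert_if)
  finally show ?thesis .
qed simp

section \<open>Pruning a tree of nested partitions\<close>

text \<open>Read p s x as the level-s cell containing x; the partitions are nested when p s factors
  through p (Suc s).\<close>

definition nonbranching :: "(nat \<Rightarrow> 'a \<Rightarrow> 'b) \<Rightarrow> nat \<Rightarrow> 'a set \<Rightarrow> bool" where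
  "nonbranching p s A \<longleftrightarrow> (\<forall>x\<in>A. \<forall>y\<in>A. p s x = p s y \<longrightarrow> p (Suc s) x = p (Suc s) y)"

lemma nonbranchingD:
  "nonbranching p s A \<Longrightarrow> x \<in> A \<Longrightarrow> y \<in> A \<Longrightarrow> p s x = p s y \<Longrightarrow> p (Suc s) x = p (Suc s) y"
  unfolding nonbranching_def by blast

lemma nonbranching_subset: "nonbranching p s A \<Longrightarrow> B \<subseteq> A \<Longrightarrow> nonbranching p s B"
  unfolding nonbranching_def by blast

lemma nonbranching_if_card_children_eq_1:
  assumes "\<And>x. x \<in> A \<Longrightarrow> card (p (Suc s) ` {y \<in> A. p s y = p s x}) = 1"
  shows "nonbranching p s A"
  unfolding nonbranching_def
proof (intro ballI impI)
  fix x y assume "x \<in> A" "y \<in> A" "p s x = p s y"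
  then have "p (Suc s) x \<in> p (Suc s) ` {y \<in> A. p s y = p s x}"
    "p (Suc s) y \<in> p (Suc s) ` {y \<in> A. p s y = p s x}"
    by auto
  with assms[OF \<open>x \<in> A\<close>] show "p (Suc s) x = p (Suc s) y"
    by (metis card_1_singletonE singletonD)
qed

definition union_of_fibers :: "('a \<Rightarrow> 'b) \<Rightarrow> 'a set \<Rightarrow> 'a set \<Rightarrow> bool" where
  "union_of_fibers f A B \<longleftrightarrow> B \<subseteq> A \<and> (\<forall>a\<in>A. \<forall>b\<in>B. f a = f b \<longrightarrow> a \<in> B)"

lemma union_of_fibers_refl: "union_of_fibers f A A"
  unfolding union_of_fibers_def by blast

lemma union_of_fibers_refine:
  "union_of_fibers f A B \<Longrightarrow> (\<And>x. f x = c (g x)) \<Longrightarrow> union_of_fibers g A B"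
  unfolding union_of_fibers_def by metis

lemma card_children_of_union_of_fibers:
  assumes "finite A" "union_of_fibers (p s) A B"
    and coarsen: "\<And>x. p s x = c (p (Suc s) x)"
    and uniform: "\<And>x. x \<in> A \<Longrightarrow> card (p (Suc s) ` {y \<in> A. p s y = p s x}) = N"
  shows "card (p (Suc s) ` B) = N * card (p s ` B)"
proof -
  have finite_B: "finite B"
    using assms(1,2) finite_subset unfolding union_of_fibers_def by blast
  have fiber: "{j \<in> p (Suc s) ` B. c j = p s x} = p (Suc s) ` {y \<in> A. p s y = p s x}" if "x \<in> B" for x
  proof
    show "{j \<in> p (Suc s) ` B. c j = p s x} \<subseteq> p (Suc s) ` {y \<in> A. p s y = p s x}"
      using assms(2) coarsen unfolding union_of_fibers_def by force
    show "p (Suc s) ` {y \<in> A. p s y = p s x} \<subseteq> {j \<in> p (Suc s) ` B. c j = p s x}"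
      using assms(2) that coarsen unfolding union_of_fibers_def by force
  qed
  have "card (p (Suc s) ` B) = (\<Sum>q\<in>c ` p (Suc s) ` B. card {j \<in> p (Suc s) ` B. c j = q})"
    using finite_B by (simp add: card_eq_sum_card_fibers)
  also have "c ` p (Suc s) ` B = p s ` B"
    unfolding image_image coarsen ..
  also have "(\<Sum>q\<in>p s ` B. card {j \<in> p (Suc s) ` B. c j = q}) = (\<Sum>q\<in>p s ` B. N)"
    using assms(2) by (intro sum.cong) (auto simp: fiber uniform union_of_fibers_def)
  finally show ?thesis
    by simp
qed

lemma exists_nonbranching_subset:
  assumes "finite B" "union_of_fibers (p s) A B" and coarsen: "\<And>x. p s x = c (p (Suc s) x)"
  obtains B' where "B' \<subseteq> B" "union_of_fibers (p (Suc s)) A B'" "nonbranching p s B'"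
    "card (p s ` B) \<le> card (p (Suc s) ` B')"
proof
  define child where "child q = p (Suc s) (SOME b. b \<in> B \<and> p s b = q)" for q
  define B' where "B' = {b \<in> B. p (Suc s) b = child (p s b)}"
  show "B' \<subseteq> B" "nonbranching p s B'"
    unfolding B'_def nonbranching_def by auto
  show "union_of_fibers (p (Suc s)) A B'"
    unfolding union_of_fibers_def
  proof (intro conjI ballI impI)
    show "B' \<subseteq> A"
      using assms(2) unfolding union_of_fibers_def B'_def by blast
    fix a b assume "a \<in> A" "b \<in> B'" "p (Suc s) a = p (Suc s) b"
    moreover from this have "p s a = p s b"
      using coarsen by metis
    ultimately show "a \<in> B'"
      using assms(2) unfolding union_of_fibers_def B'_def by auto
  qed
  have "p s ` B \<subseteq> p s ` B'"
  proof
    fix q assume "q \<in> p s ` B"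
    define b where "b = (SOME b. b \<in> B \<and> p s b = q)"
    have b: "b \<in> B \<and> p s b = q"
      unfolding b_def by (rule someI_ex) (use \<open>q \<in> p s ` B\<close> in blast)
    moreover have "child q = p (Suc s) b"
      unfolding child_def b_def ..
    ultimately have "b \<in> B'"
      unfolding B'_def by simp
    with b show "q \<in> p s ` B'"
      by blast
  qed
  then have "card (p s ` B) \<le> card (p s ` B')"
    using assms(1) \<open>B' \<subseteq> B\<close> by (intro card_mono) (auto intro: finite_subset)
  also have "p s ` B' = c ` p (Suc s) ` B'"
    unfolding image_image coarsen ..
  also have "card \<dots> \<le> card (p (Suc s) ` B')"
    using assms(1) \<open>B' \<subseteq> B\<close> by (intro card_image_le) (auto intro: finite_subset)
  finally show "card (p s ` B) \<le> card (p (Suc s) ` B')" .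
qed

lemma exists_pruned_subset:
  fixes p :: "nat \<Rightarrow> 'a \<Rightarrow> 'b"
  assumes "finite A" "A \<noteq> {}"
    and coarsen: "\<And>s x. p s x = c s (p (Suc s) x)"
    and uniform: "\<And>s x. s < l \<Longrightarrow> x \<in> A \<Longrightarrow> card (p (Suc s) ` {y \<in> A. p s y = p s x}) = N s"
  obtains A' where "A' \<subseteq> A" "\<And>s. s < l \<Longrightarrow> \<not> Q s \<Longrightarrow> nonbranching p s A'"
    "(\<Prod>s | s < l \<and> Q s. N s) \<le> card (p l ` A')"
proof -
  \<comment> \<open>Being a union of level-t cells of A, the pruned set inherits the branching numbers of A.\<close>
  have "\<exists>B. union_of_fibers (p t) A B \<and> (\<forall>s<t. \<not> Q s \<longrightarrow> nonbranching p s B)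
          \<and> (\<Prod>s | s < t \<and> Q s. N s) \<le> card (p t ` B)" if "t \<le> l" for t
    using that
  proof (induction t)
    case 0
    have "1 \<le> card (p 0 ` A)"
      using assms(1,2) by (simp add: Suc_le_eq card_gt_0_iff)
    then show ?case
      using union_of_fibers_refl by auto
  next
    case (Suc t)
    then obtain B where B: "union_of_fibers (p t) A B" "\<forall>s<t. \<not> Q s \<longrightarrow> nonbranching p s B"
        "(\<Prod>s | s < t \<and> Q s. N s) \<le> card (p t ` B)" and "t < l"
      by auto
    have finite_B: "finite B"
      using B(1) assms(1) finite_subset unfolding union_of_fibers_def by blast
    show ?case
    proof (cases "Q t")
      case True
      have "card (p (Suc t) ` B) = N t * card (p t ` B)"
        using card_children_of_union_of_fibers[OF assms(1) B(1) coarsen uniform[OF \<open>t < l\<close>]] .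
      moreover have "{s. s < Suc t \<and> Q s} = insert t {s. s < t \<and> Q s}"
        using True less_Suc_eq by auto
      ultimately have "(\<Prod>s | s < Suc t \<and> Q s. N s) \<le> card (p (Suc t) ` B)"
        using B(3) by simp
      moreover have "union_of_fibers (p (Suc t)) A B"
        using B(1) coarsen by (rule union_of_fibers_refine)
      moreover have "\<forall>s<Suc t. \<not> Q s \<longrightarrow> nonbranching p s B"
        using B(2) True less_Suc_eq by auto
      ultimately show ?thesis
        by blast
    next
      case False
      obtain B' where B': "B' \<subseteq> B" "union_of_fibers (p (Suc t)) A B'" "nonbranching p t B'"
          "card (p t ` B) \<le> card (p (Suc t) ` B')"
        using exists_nonbranching_subset[OF finite_B B(1) coarsen] by blast
      moreover have "{s. s < Suc t \<and> Q s} = {s. s < t \<and> Q s}"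
        using False less_Suc_eq by auto
      moreover have "\<forall>s<Suc t. \<not> Q s \<longrightarrow> nonbranching p s B'"
        using B(2) B'(1,3) less_Suc_eq by (auto intro: nonbranching_subset)
      ultimately show ?thesis
        using B(3) B'(2,4) by auto
    qed
  qed
  then show ?thesis
    using that unfolding union_of_fibers_def by blast
qed

section \<open>Dyadic digits\<close>

definition dyadic_index :: "nat \<Rightarrow> real \<Rightarrow> int" where
  "dyadic_index n x = \<lfloor>x * 2 ^ n\<rfloor>"

lemma dyadic_index_div: "dyadic_index (n + k) x div 2 ^ k = dyadic_index n x"
proof -
  have "x * 2 ^ n = x * 2 ^ (n + k) / real_of_int (2 ^ k)"
    by (simp add: power_add)
  then show ?thesis
    unfolding dyadic_index_def by (metis floor_divide_real_eq_div zero_le_numeral zero_le_power)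
qed

lemma dyadic_index_Suc_level: "dyadic_index (s * D) x = dyadic_index (Suc s * D) x div 2 ^ D"
  using dyadic_index_div[of "s * D" D x] by (simp add: add.commute)

lemma dyadic_index_add:
  "dyadic_index n a + dyadic_index n h \<in> {dyadic_index n (a + h) - 1, dyadic_index n (a + h)}"
proof -
  have "\<lfloor>a * 2 ^ n\<rfloor> + \<lfloor>h * 2 ^ n\<rfloor> \<le> \<lfloor>(a + h) * (2::real) ^ n\<rfloor>"
    "\<lfloor>(a + h) * (2::real) ^ n\<rfloor> \<le> \<lfloor>a * 2 ^ n\<rfloor> + \<lfloor>h * 2 ^ n\<rfloor> + 1"
    by (simp_all add: distrib_right) linarith+
  then show ?thesis
    unfolding dyadic_index_def by auto
qed

lemma dyadic_index_range: "x \<in> {0..<1} \<Longrightarrow> dyadic_index n x \<in> {0..<2 ^ n}"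
  unfolding dyadic_index_def by (auto simp: floor_less_iff)

lemma dyadic_interval_iff:
  "(of_int j / 2 ^ n \<le> x \<and> x < (of_int j + 1) / 2 ^ n) \<longleftrightarrow> dyadic_index n x = j"
  by (simp add: dyadic_index_def floor_eq_iff pos_divide_le_eq pos_less_divide_eq)

lemma covering_number_eq_card_dyadic_index:
  "covering_number E n = card (dyadic_index n ` E)"
proof -
  define interval :: "int \<Rightarrow> real set" where "interval j = {x. dyadic_index n x = j}" for j
  have "dyadic_intervals n = range interval"
    unfolding dyadic_intervals_def interval_def dyadic_interval_iff by auto
  then have "dyadic_intervals_meeting n E = interval ` dyadic_index n ` E"
    unfolding dyadic_intervals_meeting_def interval_def by auto
  moreover have "inj interval"
  proof (rule injI)
    fix j k assume "interval j = interval k"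
    moreover have "of_int j / 2 ^ n \<in> interval j"
      by (simp add: interval_def dyadic_index_def)
    ultimately show "j = k"
      by (simp add: interval_def dyadic_index_def)
  qed
  ultimately show ?thesis
    unfolding covering_number_def by (simp add: card_image inj_on_subset)
qed

lemma uniform_setD:
  assumes "uniform_set D l R A" "s < l" "x \<in> A"
  shows "card (dyadic_index (Suc s * D) ` {y \<in> A. dyadic_index (s * D) y = dyadic_index (s * D) x}) = R s"
proof -
  let ?I = "{y. dyadic_index (s * D) y = dyadic_index (s * D) x}"
  have "?I \<in> dyadic_intervals_meeting (s * D) A"
    using assms(3) unfolding dyadic_intervals_meeting_def dyadic_intervals_def dyadic_interval_iff by auto
  then have "covering_number (A \<inter> ?I) (Suc s * D) = R s"
    using assms(1,2) unfolding uniform_set_def by simp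
  moreover have "A \<inter> ?I = {y \<in> A. dyadic_index (s * D) y = dyadic_index (s * D) x}"
    by blast
  ultimately show ?thesis
    by (simp add: covering_number_eq_card_dyadic_index)
qed

lemma inj_on_dyadic_index:
  assumes "dyadic_grid_set n E"
  shows "inj_on (dyadic_index n) E"
proof (rule inj_onI)
  fix x y assume "x \<in> E" "y \<in> E" "dyadic_index n x = dyadic_index n y"
  moreover obtain j k :: int where "x = of_int j / 2 ^ n" "y = of_int k / 2 ^ n"
    using assms \<open>x \<in> E\<close> \<open>y \<in> E\<close> unfolding dyadic_grid_set_def by blast
  ultimately show "x = y"
    by (simp add: dyadic_index_def)
qed

lemma finite_if_inj_on_dyadic_index:
  assumes "E \<subseteq> {0..<1}" "inj_on (dyadic_index n) E"
  shows "finite E"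
proof (rule finite_imageD[OF _ assms(2)])
  show "finite (dyadic_index n ` E)"
    by (rule finite_subset[of _ "{0..<2 ^ n}"]) (use assms(1) dyadic_index_range in auto)
qed

section \<open>Sums of sets with a non-branching summand at every level\<close>

definition digit_pairs :: "nat \<Rightarrow> real set \<Rightarrow> real set \<Rightarrow> real \<Rightarrow> (int \<times> int) set" where
  "digit_pairs n A H z = (\<lambda>(a, h). (dyadic_index n a, dyadic_index n h)) ` {(a, h) \<in> A \<times> H. a + h = z}"

lemma finite_digit_pairs: "finite A \<Longrightarrow> finite H \<Longrightarrow> finite (digit_pairs n A H z)"
  unfolding digit_pairs_def by (rule finite_imageI, rule finite_subset[of _ "A \<times> H"]) auto

lemma card_digit_pairs_fiber_le_2:
  fixes D :: nat
  defines "coarse \<equiv> map_prod (\<lambda>j. j div 2 ^ D) (\<lambda>j. j div 2 ^ D)"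
  assumes "nonbranching (\<lambda>s. dyadic_index (s * D)) t A \<or> nonbranching (\<lambda>s. dyadic_index (s * D)) t H"
  shows "card {u \<in> digit_pairs (Suc t * D) A H z. coarse u = w} \<le> 2"
proof (rule card_le_2_if_coordinate_fixed)
  \<comment> \<open>A fiber of coarse fixes the level-t digits of a and h; those of the non-branching summand
    at level t+1 are then determined, and the digit sum is determined by z up to a carry.\<close>
  let ?U = "{u \<in> digit_pairs (Suc t * D) A H z. coarse u = w}"
  have representation: "\<exists>a h. a \<in> A \<and> h \<in> H \<and> a + h = z
      \<and> u = (dyadic_index (Suc t * D) a, dyadic_index (Suc t * D) h)
      \<and> w = (dyadic_index (t * D) a, dyadic_index (t * D) h)" if "u \<in> ?U" for u
    using that unfolding digit_pairs_def coarse_def by (auto simp: dyadic_index_Suc_level[of t] simp del: mult_Suc)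
  show "fst u + snd u \<in> {dyadic_index (Suc t * D) z - 1, dyadic_index (Suc t * D) z}" if "u \<in> ?U" for u
    using representation[OF that] dyadic_index_add by fastforce
  from assms(2) show "(\<forall>u\<in>?U. \<forall>v\<in>?U. fst u = fst v) \<or> (\<forall>u\<in>?U. \<forall>v\<in>?U. snd u = snd v)"
  proof
    assume nonbranching_A: "nonbranching (\<lambda>s. dyadic_index (s * D)) t A"
    have "fst u = fst v" if "u \<in> ?U" "v \<in> ?U" for u v
      using representation[OF that(1)] representation[OF that(2)]
      by (auto dest: nonbranchingD[OF nonbranching_A])
    then show ?thesis
      by blast
  next
    assume nonbranching_H: "nonbranching (\<lambda>s. dyadic_index (s * D)) t H"
    have "snd u = snd v" if "u \<in> ?U" "v \<in> ?U" for u v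
      using representation[OF that(1)] representation[OF that(2)]
      by (auto dest: nonbranchingD[OF nonbranching_H])
    then show ?thesis
      by blast
  qed
qed

lemma card_digit_pairs_Suc_le:
  assumes "finite A" "finite H"
    and "nonbranching (\<lambda>s. dyadic_index (s * D)) t A \<or> nonbranching (\<lambda>s. dyadic_index (s * D)) t H"
  shows "card (digit_pairs (Suc t * D) A H z) \<le> 2 * card (digit_pairs (t * D) A H z)"
proof -
  let ?coarse = "map_prod (\<lambda>j. j div 2 ^ D) (\<lambda>j :: int. j div 2 ^ D)"
  have "card (digit_pairs (Suc t * D) A H z) \<le> 2 * card (?coarse ` digit_pairs (Suc t * D) A H z)"
    using finite_digit_pairs[OF assms(1,2)] card_digit_pairs_fiber_le_2[OF assms(3)]
    by (rule card_le_mult_card_image)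
  also have "?coarse ` digit_pairs (Suc t * D) A H z = digit_pairs (t * D) A H z"
    unfolding digit_pairs_def image_image
    by (rule image_cong) (auto simp: dyadic_index_Suc_level[of t] simp del: mult_Suc)
  finally show ?thesis .
qed

lemma card_representations_le:
  fixes A H :: "real set"
  assumes "A \<subseteq> {0..<1}" "H \<subseteq> {0..<1}"
    and "inj_on (dyadic_index (l * D)) A" "inj_on (dyadic_index (l * D)) H"
    and "\<And>s. s < l \<Longrightarrow> nonbranching (\<lambda>s. dyadic_index (s * D)) s A \<or> nonbranching (\<lambda>s. dyadic_index (s * D)) s H"
  shows "card {(a, h) \<in> A \<times> H. a + h = z} \<le> 2 ^ l"
proof -
  have "finite A" "finite H"
    using assms(1-4) finite_if_inj_on_dyadic_index by blast+
  have bound: "card (digit_pairs (t * D) A H z) \<le> 2 ^ t" if "t \<le> l" for t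
    using that
  proof (induction t)
    case 0
    have "digit_pairs (0 * D) A H z \<subseteq> {(0, 0)}"
      unfolding digit_pairs_def using assms(1,2) dyadic_index_range[of _ 0] by fastforce
    then have "card (digit_pairs (0 * D) A H z) \<le> card {(0 :: int, 0 :: int)}"
      by (intro card_mono) auto
    then show ?case
      by simp
  next
    case (Suc t)
    then have "card (digit_pairs (Suc t * D) A H z) \<le> 2 * card (digit_pairs (t * D) A H z)"
      by (intro card_digit_pairs_Suc_le \<open>finite A\<close> \<open>finite H\<close> assms(5)) simp
    with Suc show ?case
      by simp
  qed
  have "inj_on (\<lambda>(a, h). (dyadic_index (l * D) a, dyadic_index (l * D) h)) {(a, h) \<in> A \<times> H. a + h = z}"
    using assms(3,4) by (auto simp: inj_on_def)
  then have "card (digit_pairs (l * D) A H z) = card {(a, h) \<in> A \<times> H. a + h = z}"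
    unfolding digit_pairs_def by (rule card_image)
  with bound[of l] show ?thesis
    by simp
qed

lemma card_mult_card_le_card_sumset:
  fixes A H :: "real set"
  assumes "A \<subseteq> {0..<1}" "H \<subseteq> {0..<1}"
    and "inj_on (dyadic_index (l * D)) A" "inj_on (dyadic_index (l * D)) H"
    and "\<And>s. s < l \<Longrightarrow> nonbranching (\<lambda>s. dyadic_index (s * D)) s A \<or> nonbranching (\<lambda>s. dyadic_index (s * D)) s H"
  shows "card A * card H \<le> 2 ^ l * card (sumset A H)"
proof -
  have "finite A" "finite H"
    using assms(1-4) finite_if_inj_on_dyadic_index by blast+
  have "sumset A H = (\<lambda>(a, h). a + h) ` (A \<times> H)"
    unfolding sumset_def by auto
  moreover have "card (A \<times> H) \<le> 2 ^ l * card ((\<lambda>(a, h). a + h) ` (A \<times> H))"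
  proof (rule card_le_mult_card_image)
    show "finite (A \<times> H)"
      using \<open>finite A\<close> \<open>finite H\<close> by simp
    fix z
    have "{x \<in> A \<times> H. (\<lambda>(a, h). a + h) x = z} = {(a, h) \<in> A \<times> H. a + h = z}"
      by auto
    then show "card {x \<in> A \<times> H. (\<lambda>(a, h). a + h) x = z} \<le> 2 ^ l"
      using card_representations_le[OF assms] by simp
  qed
  ultimately show ?thesis
    by (simp add: card_cartesian_product)
qed

lemma card_sumset_mono:
  assumes "finite A" "finite H" "A' \<subseteq> A"
  shows "card (sumset A' H) \<le> card (sumset A H)"
proof (rule card_mono)
  show "finite (sumset A H)"
    using assms(1,2) by (simp add: sumset_def finite_image_set2)
  show "sumset A' H \<subseteq> sumset A H"
    using assms(3) unfolding sumset_def by blast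
qed

lemma prod_mult_card_le_card_sumset:
  fixes A H :: "real set"
  assumes "A \<subseteq> {0..<1}" "H \<subseteq> {0..<1}" "dyadic_grid_set (l * D) A" "dyadic_grid_set (l * D) H"
    and "A \<noteq> {}" "uniform_set D l R H" "uniform_set D l R' A"
  shows "(\<Prod>s | s < l \<and> R s = 1. R' s) * card H \<le> 2 ^ l * card (sumset A H)"
proof -
  let ?level = "\<lambda>s. dyadic_index (s * D)"
  have inj: "inj_on (dyadic_index (l * D)) A" "inj_on (dyadic_index (l * D)) H"
    using assms(3,4) by (simp_all add: inj_on_dyadic_index)
  have "finite A" "finite H"
    using assms(1,2) inj finite_if_inj_on_dyadic_index by blast+
  obtain A' where A': "A' \<subseteq> A" "\<And>s. s < l \<Longrightarrow> R s \<noteq> 1 \<Longrightarrow> nonbranching ?level s A'"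
    "(\<Prod>s | s < l \<and> R s = 1. R' s) \<le> card (?level l ` A')"
    using exists_pruned_subset[where p = ?level and c = "\<lambda>_ j. j div 2 ^ D" and Q = "\<lambda>s. R s = 1",
        OF \<open>finite A\<close> assms(5) dyadic_index_Suc_level uniform_setD[OF assms(7)]] by blast
  have "(\<Prod>s | s < l \<and> R s = 1. R' s) \<le> card A'"
    using A'(1,3) \<open>finite A\<close> by (meson card_image_le finite_subset order_trans)
  then have "(\<Prod>s | s < l \<and> R s = 1. R' s) * card H \<le> card A' * card H"
    by simp
  also have "\<dots> \<le> 2 ^ l * card (sumset A' H)"
  proof (rule card_mult_card_le_card_sumset)
    show "nonbranching ?level s A' \<or> nonbranching ?level s H" if "s < l" for s
    proof (cases "R s = 1")
      case True
      then show ?thesis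
        using uniform_setD[OF assms(6) that] by (simp add: nonbranching_if_card_children_eq_1)
    qed (use A'(2) that in simp)
  qed (use A'(1) assms(1,2) inj in \<open>auto intro: inj_on_subset\<close>)
  also have "\<dots> \<le> 2 ^ l * card (sumset A H)"
    using card_sumset_mono[OF \<open>finite A\<close> \<open>finite H\<close> A'(1)] by simp
  finally show ?thesis .
qed

theorem mainTheorem11:
  fixes D l m :: nat and R R' :: "nat \<Rightarrow> nat" and H A :: "real set"
  assumes "D \<ge> 1"
    and "m = l * D"
    and "\<forall>s<l. 1 \<le> R s \<and> R s \<le> 2 ^ D"
    and "\<forall>s<l. 1 \<le> R' s \<and> R' s \<le> 2 ^ D"
    and "H \<subseteq> {0..<1}" and "A \<subseteq> {0..<1}"
    and "dyadic_grid_set m H" and "dyadic_grid_set m A"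
    and "A \<noteq> {}"
    and "uniform_set D l R H" and "uniform_set D l R' A"
  shows "real (card (sumset A H)) \<ge>
           2 powr (- (real m / real D)) * real (card H) * (\<Prod>s\<in>{s. s < l \<and> R s = 1}. real (R' s))"
proof -
  have "(\<Prod>s | s < l \<and> R s = 1. R' s) * card H \<le> 2 ^ l * card (sumset A H)"
    using prod_mult_card_le_card_sumset assms(2,5-11) by blast
  then have "real (\<Prod>s | s < l \<and> R s = 1. R' s) * card H \<le> 2 ^ l * card (sumset A H)"
    by (metis of_nat_le_iff of_nat_mult of_nat_numeral of_nat_power)
  then have "1 / 2 ^ l * real (card H) * real (\<Prod>s | s < l \<and> R s = 1. R' s) \<le> card (sumset A H)"
    by (simp add: field_simps)
  moreover have "real m / real D = real l"
    using assms(1,2) by simp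
  then have "2 powr (- (real m / real D)) = 1 / 2 ^ l"
    by (simp add: powr_minus powr_realpow divide_inverse)
  ultimately show ?thesis
    by (simp add: of_nat_prod)
qed

end
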